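(* Let $\mathcal{G}$ be an $N$-player game with finite action spaces $\mathcal{A}^1,\dots,\mathcal{A}^N$ and payoffs $u^i$; let $\varepsilon\ge0$, $s\ge1$, and metrics $d^{-i}$ on $\mathcal{A}^{-i}$ define optimal transport ambiguity sets. For a profile of mixed strategies $(\bar p^1,\dots,\bar p^N)$, the following are equivalent: (1) $(\bar p^1,\dots,\bar p^N)$ is a strategically robust equilibrium of $\mathcal{G}$ with robustness level $\varepsilon$; (2) for every $i\in\{1,\dots,N\}$ there exist $\lambda^i\in\mathbb{R}$, $\xi^i(a^{-i})\in\mathbb{R}$ ($a^{-i}\in\mathcal{A}^{-i}$), $\tau^i\in\mathbb{R}$, $\omega^i(a^i)\in\mathbb{R}$ ($a^i\in\mathcal{A}^i$), $\kappa^i\in\mathbb{R}$, and $\eta^i(a^{-i},\hat a^{-i})\in\mathbb{R}$ ($a^{-i},\hat a^{-i}\in\mathcal{A}^{-i}$) such that $$\omega^i(a^i)+\kappa^i+\sum_{a^{-i}\in\mathcal{A}^{-i}}\sum_{\hat a^{-i}\in\mathcal{A}^{-i}}\eta^i(a^{-i},\hat a^{-i})\,u^i(a^i,\hat a^{-i})=0\quad\forall a^i\in\mathcal{A}^i,$$ $$-\varepsilon^s+\tau^i+\sum_{a^{-i}}\sum_{\hat a^{-i}}\eta^i(a^{-i},\hat a^{-i})\,d^{-i}(a^{-i},\hat a^{-i})^s=0,$$ $$\prod_{j\ne i}\bar p^j(a^j)-\sum_{\hat a^{-i}\in\mathcal{A}^{-i}}\eta^i(a^{-i},\hat a^{-i})=0\quad\forall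 a^{-i}=(a^j)_{j\ne i}\in\mathcal{A}^{-i},$$ and the complementarity conditions $$0\le\tau^i\perp\lambda^i\ge0,\qquad 0\le\omega^i(a^i)\perp\bar p^i(a^i)\ge0\quad\forall a^i\in\mathcal{A}^i,$$ $$0\le\eta^i(a^{-i},\hat a^{-i})\perp\Big(-\xi^i(a^{-i})+\sum_{a^i\in\mathcal{A}^i}u^i(a^i,\hat a^{-i})\bar p^i(a^i)+\lambda^i d^{-i}(a^{-i},\hat a^{-i})^s\Big)\ge0\quad\forall a^{-i},\hat a^{-i}\in\mathcal{A}^{-i}.$$
   Context: $\mathcal{A}^{-i}:=\prod_{j\ne i}\mathcal{A}^j$. Mixed strategies $\bar p^i$ are probability vectors on $\mathcal{A}^i$; $\sigma_{p^{-i}}$ is the product distribution of $(p^j)_{j\ne i}$ on $\mathcal{A}^{-i}$. For a distribution $q$ on $\mathcal{A}^{-i}$, $U^i(p^i,q)=\sum_{a^i,a^{-i}}p^i(a^i)q(a^{-i})u^i(a^i,a^{-i})$. Ambiguity set: $\mathcal{S}^i_\varepsilon(p^{-i})=\{q:W_s(\sigma_{p^{-i}},q)\le\varepsilon\}$ with $W_s(\mu,\nu)=\left(\min_{\gamma\in\Gamma(\mu,\nu)}\sum_{x,y}d^{-i}(x,y)^s\gamma(x,y)\right)^{1/s}$ over couplings $\Gamma(\mu,\nu)$. A profile $(\bar p^1,\dots,\bar p^N)$ is a strategically robust equilibrium with robustness level $\varepsilon$ if for every $i$, $\bar p^i\in\arg\max_{p^i}\min_{q\in\mathcal{S}^i_\varepsilon(\bar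 p^{-i})}U^i(p^i,q)$. The notation $0\le x\perp y\ge0$ means $x\ge0$, $y\ge0$ and $xy=0$. *)

theory Defs
  imports "HOL-Analysis.Analysis"
begin

(* Players are 0..N-1. All actions live in a common type 'a; player i's action
   set is A i. A full action profile is a function nat => 'a. *)

definition opp_profiles :: "nat \<Rightarrow> (nat \<Rightarrow> 'a set) \<Rightarrow> nat \<Rightarrow> (nat \<Rightarrow> 'a) set" where
  "opp_profiles N A i = PiE ({..<N} - {i}) A"

definition is_mixed :: "'b set \<Rightarrow> ('b \<Rightarrow> real) \<Rightarrow> bool" where
  "is_mixed S p \<longleftrightarrow> (\<forall>x\<in>S. p x \<ge> 0) \<and> (\<Sum>x\<in>S. p x) = 1"

definition sigma_opp :: "nat \<Rightarrow> nat \<Rightarrow> (nat \<Rightarrow> 'a \<Rightarrow> real) \<Rightarrow> (nat \<Rightarrow> 'a) \<Rightarrow> real" where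
  "sigma_opp N i p b = (\<Prod>j\<in>{..<N} - {i}. p j (b j))"

definition U :: "nat \<Rightarrow> (nat \<Rightarrow> 'a set) \<Rightarrow> (nat \<Rightarrow> (nat \<Rightarrow> 'a) \<Rightarrow> real) \<Rightarrow> nat
    \<Rightarrow> ('a \<Rightarrow> real) \<Rightarrow> ((nat \<Rightarrow> 'a) \<Rightarrow> real) \<Rightarrow> real" where
  "U N A u i pp q = (\<Sum>a\<in>A i. \<Sum>b\<in>opp_profiles N A i. pp a * q b * u i (b(i := a)))"

definition couplings :: "'b set \<Rightarrow> ('b \<Rightarrow> real) \<Rightarrow> ('b \<Rightarrow> real) \<Rightarrow> ('b \<times> 'b \<Rightarrow> real) set" where
  "couplings S mu nu = {g. (\<forall>x\<in>S. \<forall>y\<in>S. g (x, y) \<ge> 0)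
      \<and> (\<forall>x\<in>S. (\<Sum>y\<in>S. g (x, y)) = mu x) \<and> (\<forall>y\<in>S. (\<Sum>x\<in>S. g (x, y)) = nu y)}"

(* optimal transport (Wasserstein-s) distance on a finite set S with ground metric d;
   the minimum over couplings is attained, so it equals the infimum *)
definition wasserstein :: "'b set \<Rightarrow> ('b \<Rightarrow> 'b \<Rightarrow> real) \<Rightarrow> real \<Rightarrow> ('b \<Rightarrow> real) \<Rightarrow> ('b \<Rightarrow> real) \<Rightarrow> real" where
  "wasserstein S d s mu nu =
     (Inf ((\<lambda>g. \<Sum>x\<in>S. \<Sum>y\<in>S. d x y powr s * g (x, y)) ` couplings S mu nu)) powr (1 / s)"

definition ambiguity_set :: "nat \<Rightarrow> (nat \<Rightarrow> 'a set) \<Rightarrow> (nat \<Rightarrow> (nat \<Rightarrow> 'a) \<Rightarrow> (nat \<Rightarrow> 'a) \<Rightarrow> real)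
    \<Rightarrow> real \<Rightarrow> real \<Rightarrow> nat \<Rightarrow> (nat \<Rightarrow> 'a \<Rightarrow> real) \<Rightarrow> ((nat \<Rightarrow> 'a) \<Rightarrow> real) set" where
  "ambiguity_set N A d s eps i p =
     {q. is_mixed (opp_profiles N A i) q \<and>
         wasserstein (opp_profiles N A i) (d i) s (sigma_opp N i p) q \<le> eps}"

definition robust_value :: "nat \<Rightarrow> (nat \<Rightarrow> 'a set) \<Rightarrow> (nat \<Rightarrow> (nat \<Rightarrow> 'a) \<Rightarrow> real)
    \<Rightarrow> (nat \<Rightarrow> (nat \<Rightarrow> 'a) \<Rightarrow> (nat \<Rightarrow> 'a) \<Rightarrow> real) \<Rightarrow> real \<Rightarrow> real \<Rightarrow> nat
    \<Rightarrow> (nat \<Rightarrow> 'a \<Rightarrow> real) \<Rightarrow> ('a \<Rightarrow> real) \<Rightarrow> real" where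
  "robust_value N A u d s eps i p pp = Inf ((\<lambda>q. U N A u i pp q) ` ambiguity_set N A d s eps i p)"

definition strategically_robust_eq :: "nat \<Rightarrow> (nat \<Rightarrow> 'a set) \<Rightarrow> (nat \<Rightarrow> (nat \<Rightarrow> 'a) \<Rightarrow> real)
    \<Rightarrow> (nat \<Rightarrow> (nat \<Rightarrow> 'a) \<Rightarrow> (nat \<Rightarrow> 'a) \<Rightarrow> real) \<Rightarrow> real \<Rightarrow> real
    \<Rightarrow> (nat \<Rightarrow> 'a \<Rightarrow> real) \<Rightarrow> bool" where
  "strategically_robust_eq N A u d s eps p \<longleftrightarrow>
     (\<forall>i<N. is_mixed (A i) (p i) \<and>
        (\<forall>pp. is_mixed (A i) pp \<longrightarrow>
           robust_value N A u d s eps i p pp \<le> robust_value N A u d s eps i p (p i)))"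

definition perp :: "real \<Rightarrow> real \<Rightarrow> bool" where
  "perp x y \<longleftrightarrow> x \<ge> 0 \<and> y \<ge> 0 \<and> x * y = 0"

definition metric_on :: "'b set \<Rightarrow> ('b \<Rightarrow> 'b \<Rightarrow> real) \<Rightarrow> bool" where
  "metric_on S d \<longleftrightarrow> (\<forall>x\<in>S. \<forall>y\<in>S. d x y \<ge> 0 \<and> (d x y = 0 \<longleftrightarrow> x = y) \<and> d x y = d y x)
     \<and> (\<forall>x\<in>S. \<forall>y\<in>S. \<forall>z\<in>S. d x z \<le> d x y + d y z)"

end

(*
  For a fixed opponent profile, player i's worst-case payoff min_{q in ball} U(p, q) is the value
  of a transport linear program over plans eta with first marginal sigma_{p^{-i}} and cost
  sum eta d^s <= eps^s.  Farkas' lemma gives strong duality with attainment of the dual, whose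
  variables are the multiplier lam >= 0 of the budget and the potentials xi of the marginals.
  Maximising over p, a second application of Farkas' lemma (a minimax argument) shows that a robust
  best response p admits a single plan eta of admissible cost under which no pure action earns more
  than the robust value.  Conditions (2) are primal-dual optimality for the combined program: for
  multipliers satisfying the three equations, the duality gap equals
  sum eta * (dual slack) + tau * lam + sum omega * p, a sum of nonnegative products, so it vanishes
  exactly when all complementarity conditions hold.
*)

theory Submission
  imports Defs
begin

section \<open>Theorems of the alternative\<close>

lemma nonneg_combination_insert:
  fixes a :: "'i \<Rightarrow> 'j \<Rightarrow> real"
  assumes "finite I" "m \<notin> I" "\<forall>i\<in>I. 0 \<le> \<mu> i" "0 \<le> t"
    and "\<forall>j\<in>J. b j = (\<Sum>i\<in>I. \<mu> i * a i j) + t * a m j"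
  shows "\<exists>\<mu>'. (\<forall>i\<in>insert m I. 0 \<le> \<mu>' i) \<and> (\<forall>j\<in>J. b j = (\<Sum>i\<in>insert m I. \<mu>' i * a i j))"
proof -
  have "(\<Sum>i\<in>I. (\<mu>(m := t)) i * a i j) = (\<Sum>i\<in>I. \<mu> i * a i j)" for j
    using assms(2) by (intro sum.cong) auto
  then show ?thesis
    using assms by (intro exI[of _ "\<mu>(m := t)"]) auto
qed

lemma farkas_cone_lift_combination:
  fixes a :: "'i \<Rightarrow> 'j \<Rightarrow> real"
  assumes "finite I" "m \<notin> I"
    and \<mu>: "\<forall>i\<in>I. 0 \<le> \<mu> i"
      "\<forall>j\<in>J. ym * b j - yb * a m j = (\<Sum>i\<in>I. \<mu> i * (ym * a i j - ya i * a m j))"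
    and ym: "ym < 0" and yb: "yb < 0" and ya: "\<forall>i\<in>I. 0 \<le> ya i"
  shows "\<exists>\<mu>'. (\<forall>i\<in>insert m I. 0 \<le> \<mu>' i) \<and> (\<forall>j\<in>J. b j = (\<Sum>i\<in>insert m I. \<mu>' i * a i j))"
proof (rule nonneg_combination_insert[OF assms(1,2) \<mu>(1)])
  define t where "t = (yb - (\<Sum>i\<in>I. \<mu> i * ya i)) / ym"
  have "0 \<le> (\<Sum>i\<in>I. \<mu> i * ya i)" using \<mu>(1) ya by (simp add: sum_nonneg)
  then show "0 \<le> t" unfolding t_def using ym yb by (simp add: divide_nonpos_neg)
  show "\<forall>j\<in>J. b j = (\<Sum>i\<in>I. \<mu> i * a i j) + t * a m j"
  proof
    fix j assume "j \<in> J"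
    then have "ym * b j - yb * a m j = ym * (\<Sum>i\<in>I. \<mu> i * a i j) - (\<Sum>i\<in>I. \<mu> i * ya i) * a m j"
      using \<mu>(2) by (simp add: algebra_simps sum_subtractf sum_distrib_left sum_distrib_right)
    then show "b j = (\<Sum>i\<in>I. \<mu> i * a i j) + t * a m j"
      using ym unfolding t_def by (simp add: field_simps)
  qed
qed

lemma farkas_cone_lift_separation:
  fixes a :: "'i \<Rightarrow> 'j \<Rightarrow> real"
  assumes z: "\<forall>i\<in>I. 0 \<le> (\<Sum>j\<in>J. z j * (ym * a i j - (\<Sum>j\<in>J. y j * a i j) * a m j))"
      "(\<Sum>j\<in>J. z j * (ym * b j - yb * a m j)) < 0"
    and ym: "ym = (\<Sum>j\<in>J. y j * a m j)" and yb: "yb = (\<Sum>j\<in>J. y j * b j)"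
  shows "\<exists>w. (\<forall>i\<in>insert m I. 0 \<le> (\<Sum>j\<in>J. w j * a i j)) \<and> (\<Sum>j\<in>J. w j * b j) < 0"
proof -
  define zm where "zm = (\<Sum>j\<in>J. z j * a m j)"
  define w where "w j = ym * z j - zm * y j" for j
  have w: "(\<Sum>j\<in>J. w j * f j) = ym * (\<Sum>j\<in>J. z j * f j) - (\<Sum>j\<in>J. y j * f j) * zm" for f
    by (simp add: w_def algebra_simps sum_subtractf sum_distrib_left)
  have z_proj: "(\<Sum>j\<in>J. z j * (ym * f j - t * a m j)) = ym * (\<Sum>j\<in>J. z j * f j) - t * zm" for f t
    by (simp add: zm_def algebra_simps sum_subtractf sum_distrib_left)
  have "0 \<le> (\<Sum>j\<in>J. w j * a i j)" if "i \<in> insert m I" for i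
  proof (cases "i = m")
    case False
    with that z(1) show ?thesis by (simp add: w z_proj)
  qed (simp add: w ym zm_def)
  moreover have "(\<Sum>j\<in>J. w j * b j) < 0"
    using z(2) by (simp add: w z_proj yb)
  ultimately show ?thesis by blast
qed

theorem farkas_cone:
  fixes a :: "'i \<Rightarrow> 'j \<Rightarrow> real" and b :: "'j \<Rightarrow> real"
  assumes "finite I" "finite J"
  shows "(\<exists>\<mu>. (\<forall>i\<in>I. 0 \<le> \<mu> i) \<and> (\<forall>j\<in>J. b j = (\<Sum>i\<in>I. \<mu> i * a i j))) \<or>
         (\<exists>y. (\<forall>i\<in>I. 0 \<le> (\<Sum>j\<in>J. y j * a i j)) \<and> (\<Sum>j\<in>J. y j * b j) < 0)"
  using assms(1)
proof (induction I arbitrary: a b rule: finite_induct)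
  case empty
  show ?case
  proof (cases "\<forall>j\<in>J. b j = 0")
    case False
    then obtain j0 where "j0 \<in> J" "b j0 \<noteq> 0" by blast
    then have "0 < (\<Sum>j\<in>J. b j * b j)"
      using assms(2) by (intro sum_pos2) (auto simp: zero_less_mult_iff)
    then show ?thesis
      by (intro disjI2 exI[of _ "\<lambda>j. - b j"]) (simp add: sum_negf)
  qed simp
next
  case (insert m I)
  consider (cone) "\<exists>\<mu>. (\<forall>i\<in>I. 0 \<le> \<mu> i) \<and> (\<forall>j\<in>J. b j = (\<Sum>i\<in>I. \<mu> i * a i j))"
    | (separated) y where "\<forall>i\<in>I. 0 \<le> (\<Sum>j\<in>J. y j * a i j)" "(\<Sum>j\<in>J. y j * b j) < 0"
    using insert.IH[where a=a and b=b] by blast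
  then show ?case
  proof cases
    case cone
    then obtain \<mu> where \<mu>: "\<forall>i\<in>I. 0 \<le> \<mu> i" "\<forall>j\<in>J. b j = (\<Sum>i\<in>I. \<mu> i * a i j)" by blast
    then have "\<forall>j\<in>J. b j = (\<Sum>i\<in>I. \<mu> i * a i j) + 0 * a m j" by simp
    from nonneg_combination_insert[OF insert.hyps \<mu>(1) order.refl this]
    show ?thesis by (rule disjI1)
  next
    case separated
    define ym where "ym = (\<Sum>j\<in>J. y j * a m j)"
    define yb where "yb = (\<Sum>j\<in>J. y j * b j)"
    show ?thesis
    proof (cases "0 \<le> ym")
      case True
      then show ?thesis using separated by (auto simp: ym_def)
    next
      case False
      \<comment> \<open>\<open>y\<close> fails only at \<open>a m\<close>: project all data along \<open>a m\<close> onto \<open>y \<bottom>\<close> and recurse\<close>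
      from insert.IH[where a="\<lambda>i j. ym * a i j - (\<Sum>j\<in>J. y j * a i j) * a m j"
          and b="\<lambda>j. ym * b j - yb * a m j"]
      show ?thesis
      proof (elim disjE exE conjE)
        fix \<mu> assume "\<forall>i\<in>I. 0 \<le> \<mu> i"
          "\<forall>j\<in>J. ym * b j - yb * a m j = (\<Sum>i\<in>I. \<mu> i * (ym * a i j - (\<Sum>j\<in>J. y j * a i j) * a m j))"
        from farkas_cone_lift_combination[OF insert.hyps this] False separated
        show ?thesis by (simp add: yb_def)
      next
        fix z assume "\<forall>i\<in>I. 0 \<le> (\<Sum>j\<in>J. z j * (ym * a i j - (\<Sum>j\<in>J. y j * a i j) * a m j))"
          "(\<Sum>j\<in>J. z j * (ym * b j - yb * a m j)) < 0"
        from farkas_cone_lift_separation[OF this ym_def yb_def]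
        show ?thesis ..
      qed
    qed
  qed
qed

lemma farkas_cone_inequalities:
  fixes a :: "'i \<Rightarrow> 'j \<Rightarrow> real" and b :: "'j \<Rightarrow> real"
  assumes "finite I" "finite J" "L \<subseteq> J"
  shows "(\<exists>\<mu>. (\<forall>i\<in>I. 0 \<le> \<mu> i) \<and> (\<forall>j\<in>L. (\<Sum>i\<in>I. \<mu> i * a i j) \<le> b j)
                \<and> (\<forall>j\<in>J - L. (\<Sum>i\<in>I. \<mu> i * a i j) = b j)) \<or>
         (\<exists>y. (\<forall>j\<in>L. 0 \<le> y j) \<and> (\<forall>i\<in>I. 0 \<le> (\<Sum>j\<in>J. y j * a i j)) \<and> (\<Sum>j\<in>J. y j * b j) < 0)"
proof -
  \<comment> \<open>add a slack generator, the unit vector at \<open>l\<close>, for every inequality \<open>l \<in> L\<close>\<close>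
  define a' where "a' k j = (case k of Inl i \<Rightarrow> a i j | Inr l \<Rightarrow> of_bool (j = l))" for k j
  have finL: "finite L" using assms(2,3) by (rule finite_subset[rotated])
  have combination: "(\<Sum>k\<in>I <+> L. \<mu> k * a' k j)
      = (\<Sum>i\<in>I. \<mu> (Inl i) * a i j) + (if j \<in> L then \<mu> (Inr j) else 0)" for \<mu> j
    using assms(1) finL
    by (simp add: sum.Plus a'_def of_bool_def if_distrib[of "\<lambda>z. _ * z"] sum.delta' cong: if_cong)
  have slack: "(\<Sum>j\<in>J. y j * a' (Inr l) j) = y l" if "l \<in> L" for y l
    using that assms(2,3) by (auto simp: a'_def of_bool_def if_distrib[of "\<lambda>z. _ * z"] cong: if_cong)
  have "finite (I <+> L)" using assms(1) finL by simp
  from farkas_cone[OF this assms(2), where a=a' and b=b] show ?thesis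
  proof (elim disjE exE conjE)
    fix \<mu> assume \<mu>: "\<forall>k\<in>I <+> L. 0 \<le> \<mu> k" "\<forall>j\<in>J. b j = (\<Sum>k\<in>I <+> L. \<mu> k * a' k j)"
    have "0 \<le> \<mu> (Inr j)" if "j \<in> L" for j
      using \<mu>(1) that by blast
    with \<mu> assms(3) show ?thesis by (intro disjI1 exI[of _ "\<lambda>i. \<mu> (Inl i)"]) (auto simp: combination)
  next
    fix y assume y: "\<forall>k\<in>I <+> L. 0 \<le> (\<Sum>j\<in>J. y j * a' k j)" "(\<Sum>j\<in>J. y j * b j) < 0"
    have "0 \<le> y l" if "l \<in> L" for l
      using y(1)[rule_format, of "Inr l"] that by (simp add: slack InrI)
    moreover have "0 \<le> (\<Sum>j\<in>J. y j * a i j)" if "i \<in> I" for i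
      using y(1)[rule_format, of "Inl i"] that by (simp add: a'_def InlI)
    ultimately show ?thesis
      using y(2) by blast
  qed
qed

lemma farkas_inequalities:
  fixes a :: "'k \<Rightarrow> 'j \<Rightarrow> real" and \<beta> :: "'k \<Rightarrow> real"
  assumes "finite K" "finite J" "P \<subseteq> J"
    and infeasible: "\<nexists>x. (\<forall>j\<in>P. 0 \<le> x j) \<and> (\<forall>k\<in>K. (\<Sum>j\<in>J. a k j * x j) \<le> \<beta> k)"
  shows "\<exists>y. (\<forall>k\<in>K. 0 \<le> y k) \<and> (\<forall>j\<in>P. 0 \<le> (\<Sum>k\<in>K. y k * a k j))
            \<and> (\<forall>j\<in>J - P. (\<Sum>k\<in>K. y k * a k j) = 0) \<and> (\<Sum>k\<in>K. y k * \<beta> k) < 0"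
proof -
  \<comment> \<open>homogenise: the constraint rows become generators \<open>(\<beta> k, - a k)\<close>, the target is \<open>(-1, 0)\<close>\<close>
  define a' where "a' k j' = (case j' of None \<Rightarrow> \<beta> k | Some j \<Rightarrow> - a k j)" for k j'
  define b :: "'j option \<Rightarrow> real" where "b j' = (case j' of None \<Rightarrow> -1 | Some j \<Rightarrow> 0)" for j'
  have "finite (insert None (Some ` J))" "Some ` P \<subseteq> insert None (Some ` J)"
    using assms(2,3) by auto
  from farkas_cone_inequalities[OF assms(1) this, where a=a' and b=b]
  show ?thesis
  proof (elim disjE exE conjE)
    fix \<mu> assume \<mu>: "\<forall>k\<in>K. 0 \<le> \<mu> k"
      "\<forall>j'\<in>Some ` P. (\<Sum>k\<in>K. \<mu> k * a' k j') \<le> b j'"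
      "\<forall>j'\<in>insert None (Some ` J) - Some ` P. (\<Sum>k\<in>K. \<mu> k * a' k j') = b j'"
    have "(\<Sum>k\<in>K. \<mu> k * \<beta> k) = -1"
      using \<mu>(3)[rule_format, of None] by (simp add: a'_def b_def)
    moreover have "0 \<le> (\<Sum>k\<in>K. \<mu> k * a k j)" if "j \<in> P" for j
      using \<mu>(2)[rule_format, of "Some j"] that by (simp add: a'_def b_def sum_negf)
    moreover have "(\<Sum>k\<in>K. \<mu> k * a k j) = 0" if "j \<in> J - P" for j
      using \<mu>(3)[rule_format, of "Some j"] that by (simp add: a'_def b_def sum_negf image_iff)
    ultimately show ?thesis using \<mu>(1) by (intro exI[of _ \<mu>]) simp
  next
    fix z assume z: "\<forall>j'\<in>Some ` P. 0 \<le> z j'"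
      "\<forall>k\<in>K. 0 \<le> (\<Sum>j'\<in>insert None (Some ` J). z j' * a' k j')"
      "(\<Sum>j'\<in>insert None (Some ` J). z j' * b j') < 0"
    have pos: "0 < z None"
      using z(3) assms(2) by (simp add: b_def sum.reindex)
    define x where "x j = z (Some j) / z None" for j
    have "\<forall>j\<in>P. 0 \<le> x j" using z(1) pos by (simp add: x_def)
    moreover have "(\<Sum>j\<in>J. a k j * x j) \<le> \<beta> k" if "k \<in> K" for k
    proof -
      have "(\<Sum>j\<in>J. z (Some j) * a k j) \<le> z None * \<beta> k"
        using z(2) that assms(2) by (simp add: a'_def sum.reindex sum_negf)
      then show ?thesis
        using pos by (simp add: x_def sum_divide_distrib[symmetric] pos_divide_le_eq mult.commute)
    qed
    ultimately show ?thesis using infeasible by blast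
  qed
qed

section \<open>Wasserstein balls on a finite set\<close>

lemma product_in_couplings:
  assumes "is_mixed S \<mu>" "is_mixed S \<nu>"
  shows "(\<lambda>(x, y). \<mu> x * \<nu> y) \<in> couplings S \<mu> \<nu>"
  using assms
  by (simp add: couplings_def is_mixed_def sum_distrib_left[symmetric] sum_distrib_right[symmetric])

lemma is_mixed_coupling_marginal:
  assumes "g \<in> couplings S \<mu> \<nu>" "is_mixed S \<mu>"
  shows "is_mixed S \<nu>"
proof -
  have marginal: "\<nu> y = (\<Sum>x\<in>S. g (x, y))" if "y \<in> S" for y
    using assms(1) that by (simp add: couplings_def)
  have "(\<Sum>y\<in>S. \<nu> y) = (\<Sum>y\<in>S. \<Sum>x\<in>S. g (x, y))"
    using marginal by simp
  also have "\<dots> = (\<Sum>x\<in>S. \<mu> x)"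
    using assms(1) by (subst sum.swap) (simp add: couplings_def)
  finally show ?thesis
    using assms by (auto simp: is_mixed_def couplings_def marginal intro: sum_nonneg)
qed

lemma wasserstein_le_iff:
  assumes \<mu>: "is_mixed S \<mu>" and \<nu>: "is_mixed S \<nu>" and d: "\<forall>x\<in>S. \<forall>y\<in>S. 0 \<le> d x y"
    and s: "0 < s" and eps: "0 \<le> eps"
  shows "wasserstein S d s \<mu> \<nu> \<le> eps \<longleftrightarrow>
    (\<forall>\<delta>>0. \<exists>g\<in>couplings S \<mu> \<nu>. (\<Sum>x\<in>S. \<Sum>y\<in>S. d x y powr s * g (x, y)) \<le> eps powr s + \<delta>)"
proof -
  define C where "C = (\<lambda>g. \<Sum>x\<in>S. \<Sum>y\<in>S. d x y powr s * g (x, y)) ` couplings S \<mu> \<nu>"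
  have ne: "C \<noteq> {}"
    using product_in_couplings[OF \<mu> \<nu>] by (auto simp: C_def)
  have nonneg: "\<forall>c\<in>C. 0 \<le> c"
    by (auto simp: C_def couplings_def intro!: sum_nonneg)
  then have bdd: "bdd_below C" by (auto simp: bdd_below_def)
  have Inf_nonneg: "0 \<le> Inf C"
    using ne nonneg by (intro cInf_greatest) auto
  have root_mono: "x powr (1 / s) \<le> y powr (1 / s) \<longleftrightarrow> x \<le> y" if "0 \<le> x" "0 \<le> y" for x y
    using that s powr_less_mono2[of "1 / s" y x] powr_mono2[of "1 / s" x y] by force
  have "(eps powr s) powr (1 / s) = eps"
    using s eps by (simp add: powr_powr)
  then have "wasserstein S d s \<mu> \<nu> \<le> eps \<longleftrightarrow> Inf C powr (1 / s) \<le> (eps powr s) powr (1 / s)"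
    by (simp add: wasserstein_def C_def)
  also have "\<dots> \<longleftrightarrow> Inf C \<le> eps powr s"
    using Inf_nonneg by (simp add: root_mono)
  also have "\<dots> \<longleftrightarrow> (\<forall>\<delta>>0. \<exists>c\<in>C. c \<le> eps powr s + \<delta>)"
  proof
    assume le: "Inf C \<le> eps powr s"
    show "\<forall>\<delta>>0. \<exists>c\<in>C. c \<le> eps powr s + \<delta>"
    proof (intro allI impI)
      fix \<delta> :: real assume "0 < \<delta>"
      with le have "Inf C < eps powr s + \<delta>" by simp
      from cInf_lessD[OF ne this] show "\<exists>c\<in>C. c \<le> eps powr s + \<delta>"
        by (auto intro: less_imp_le)
    qed
  next
    assume near: "\<forall>\<delta>>0. \<exists>c\<in>C. c \<le> eps powr s + \<delta>"
    show "Inf C \<le> eps powr s"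
    proof (rule field_le_epsilon)
      fix \<delta> :: real assume "0 < \<delta>"
      with near obtain c where "c \<in> C" "c \<le> eps powr s + \<delta>" by blast
      with cInf_lower[OF _ bdd] show "Inf C \<le> eps powr s + \<delta>" by fastforce
    qed
  qed
  finally show ?thesis by (simp add: C_def)
qed

section \<open>The robust best-response problem of one player\<close>

definition robust_kkt :: "'b set \<Rightarrow> 'c set \<Rightarrow> ('b \<Rightarrow> real) \<Rightarrow> ('b \<Rightarrow> 'b \<Rightarrow> real) \<Rightarrow> real
    \<Rightarrow> ('c \<Rightarrow> 'b \<Rightarrow> real) \<Rightarrow> ('c \<Rightarrow> real) \<Rightarrow> bool" where
  "robust_kkt S A \<sigma> c E u p \<longleftrightarrow>
    (\<exists>lam \<xi> \<tau> \<omega> \<kappa> \<eta>.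
       (\<forall>a\<in>A. \<omega> a + \<kappa> + (\<Sum>x\<in>S. \<Sum>y\<in>S. \<eta> x y * u a y) = 0) \<and>
       - E + \<tau> + (\<Sum>x\<in>S. \<Sum>y\<in>S. \<eta> x y * c x y) = 0 \<and>
       (\<forall>x\<in>S. \<sigma> x - (\<Sum>y\<in>S. \<eta> x y) = 0) \<and>
       perp \<tau> lam \<and>
       (\<forall>a\<in>A. perp (\<omega> a) (p a)) \<and>
       (\<forall>x\<in>S. \<forall>y\<in>S. perp (\<eta> x y) (- \<xi> x + (\<Sum>a\<in>A. u a y * p a) + lam * c x y)))"

(* S is the set of opponent profiles, sigma their nominal distribution, c = d^s the transport cost
   and E = eps^s the budget.  The ball is described through couplings of cost at most E + delta for
   every delta > 0. *)
locale robust_player =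
  fixes S :: "'b set" and A :: "'c set" and \<sigma> :: "'b \<Rightarrow> real"
    and c :: "'b \<Rightarrow> 'b \<Rightarrow> real" and E :: real and u :: "'c \<Rightarrow> 'b \<Rightarrow> real"
  assumes finite_S: "finite S" and finite_A: "finite A"
    and \<sigma>: "is_mixed S \<sigma>"
    and c_diag: "\<forall>x\<in>S. c x x = 0"
    and E_nonneg: "0 \<le> E"
begin

definition transport_ball :: "('b \<Rightarrow> real) set" where
  "transport_ball = {q. \<forall>\<delta>>0. \<exists>g\<in>couplings S \<sigma> q. (\<Sum>x\<in>S. \<Sum>y\<in>S. c x y * g (x, y)) \<le> E + \<delta>}"

definition plan :: "('b \<Rightarrow> 'b \<Rightarrow> real) \<Rightarrow> bool" where
  "plan \<eta> \<longleftrightarrow> (\<forall>x\<in>S. \<forall>y\<in>S. 0 \<le> \<eta> x y) \<and> (\<forall>x\<in>S. (\<Sum>y\<in>S. \<eta> x y) = \<sigma> x)"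

definition cost :: "('b \<Rightarrow> 'b \<Rightarrow> real) \<Rightarrow> real" where
  "cost \<eta> = (\<Sum>x\<in>S. \<Sum>y\<in>S. \<eta> x y * c x y)"

definition payoff :: "('c \<Rightarrow> real) \<Rightarrow> 'b \<Rightarrow> real" where
  "payoff \<pi> y = (\<Sum>a\<in>A. u a y * \<pi> a)"

definition expected_payoff :: "('c \<Rightarrow> real) \<Rightarrow> ('b \<Rightarrow> real) \<Rightarrow> real" where
  "expected_payoff \<pi> q = (\<Sum>a\<in>A. \<Sum>y\<in>S. \<pi> a * q y * u a y)"

definition robust_payoff :: "('c \<Rightarrow> real) \<Rightarrow> real" where
  "robust_payoff \<pi> = Inf (expected_payoff \<pi> ` transport_ball)"

definition dual_feasible :: "('c \<Rightarrow> real) \<Rightarrow> real \<Rightarrow> ('b \<Rightarrow> real) \<Rightarrow> bool" where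
  "dual_feasible \<pi> lam \<xi> \<longleftrightarrow> 0 \<le> lam \<and> (\<forall>x\<in>S. \<forall>y\<in>S. \<xi> x - lam * c x y \<le> payoff \<pi> y)"

definition dual_value :: "real \<Rightarrow> ('b \<Rightarrow> real) \<Rightarrow> real" where
  "dual_value lam \<xi> = (\<Sum>x\<in>S. \<sigma> x * \<xi> x) - lam * E"

lemma plan_marginal_in_transport_ball:
  assumes "plan \<eta>" "cost \<eta> \<le> E"
  shows "(\<lambda>y. \<Sum>x\<in>S. \<eta> x y) \<in> transport_ball"
proof -
  have "(\<lambda>(x, y). \<eta> x y) \<in> couplings S \<sigma> (\<lambda>y. \<Sum>x\<in>S. \<eta> x y)"
    using assms(1) by (simp add: couplings_def plan_def)
  moreover have "(\<Sum>x\<in>S. \<Sum>y\<in>S. c x y * \<eta> x y) \<le> E + \<delta>" if "0 < \<delta>" for \<delta>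
    using assms(2) that by (simp add: cost_def mult.commute)
  ultimately show ?thesis
    unfolding transport_ball_def by (auto intro!: bexI[of _ "\<lambda>(x, y). \<eta> x y"])
qed

lemma transport_ball_nonempty: "transport_ball \<noteq> {}"
proof -
  define \<eta> where "\<eta> x y = (if x = y then \<sigma> x else 0)" for x y
  have "plan \<eta>"
    using \<sigma> finite_S by (simp add: plan_def \<eta>_def is_mixed_def)
  moreover have "cost \<eta> \<le> E"
    using c_diag E_nonneg finite_S by (simp add: cost_def \<eta>_def if_distrib[of "\<lambda>z. z * _"] cong: if_cong)
  ultimately show ?thesis
    using plan_marginal_in_transport_ball by blast
qed

lemma transport_ball_plan:
  assumes "q \<in> transport_ball" "0 < \<delta>"
  obtains \<eta> where "plan \<eta>" "cost \<eta> \<le> E + \<delta>" "\<forall>y\<in>S. (\<Sum>x\<in>S. \<eta> x y) = q y"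
proof -
  obtain g where "g \<in> couplings S \<sigma> q" "(\<Sum>x\<in>S. \<Sum>y\<in>S. c x y * g (x, y)) \<le> E + \<delta>"
    using assms unfolding transport_ball_def by blast
  then show ?thesis
    by (intro that[of "\<lambda>x y. g (x, y)"]) (simp_all add: plan_def couplings_def cost_def mult.commute)
qed

lemma expected_payoff_marginal:
  assumes "\<forall>y\<in>S. (\<Sum>x\<in>S. \<eta> x y) = q y"
  shows "expected_payoff \<pi> q = (\<Sum>x\<in>S. \<Sum>y\<in>S. \<eta> x y * payoff \<pi> y)"
proof -
  have "expected_payoff \<pi> q = (\<Sum>y\<in>S. q y * payoff \<pi> y)"
    unfolding expected_payoff_def payoff_def
    by (subst sum.swap) (simp add: sum_distrib_left mult_ac)
  also have "\<dots> = (\<Sum>y\<in>S. \<Sum>x\<in>S. \<eta> x y * payoff \<pi> y)"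
    using assms by (simp flip: sum_distrib_right)
  finally show ?thesis
    by (subst sum.swap)
qed

lemma plan_payoff_by_action:
  "(\<Sum>x\<in>S. \<Sum>y\<in>S. \<eta> x y * payoff \<pi> y) = (\<Sum>a\<in>A. \<pi> a * (\<Sum>x\<in>S. \<Sum>y\<in>S. \<eta> x y * u a y))"
  unfolding payoff_def
  by (simp add: sum_distrib_left sum.swap[of _ A] mult_ac)

lemma dual_value_le_plan_payoff:
  assumes "plan \<eta>" "dual_feasible \<pi> lam \<xi>"
  shows "(\<Sum>x\<in>S. \<sigma> x * \<xi> x) - lam * cost \<eta> \<le> (\<Sum>x\<in>S. \<Sum>y\<in>S. \<eta> x y * payoff \<pi> y)"
proof -
  have "(\<Sum>x\<in>S. \<sigma> x * \<xi> x) = (\<Sum>x\<in>S. \<Sum>y\<in>S. \<eta> x y * \<xi> x)"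
    using assms(1) by (simp add: plan_def flip: sum_distrib_right)
  then have "(\<Sum>x\<in>S. \<sigma> x * \<xi> x) - lam * cost \<eta> = (\<Sum>x\<in>S. \<Sum>y\<in>S. \<eta> x y * (\<xi> x - lam * c x y))"
    by (simp add: cost_def algebra_simps sum_subtractf sum_distrib_left)
  also have "\<dots> \<le> (\<Sum>x\<in>S. \<Sum>y\<in>S. \<eta> x y * payoff \<pi> y)"
    using assms by (auto simp: plan_def dual_feasible_def intro!: sum_mono mult_left_mono)
  finally show ?thesis .
qed

lemma dual_value_le_expected_payoff:
  assumes q: "q \<in> transport_ball" and feasible: "dual_feasible \<pi> lam \<xi>"
  shows "dual_value lam \<xi> \<le> expected_payoff \<pi> q"
proof (rule field_le_epsilon)
  fix e :: real assume "0 < e"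
  have lam: "0 \<le> lam" using feasible by (simp add: dual_feasible_def)
  define \<delta> where "\<delta> = e / (lam + 1)"
  have "0 < \<delta>" using \<open>0 < e\<close> lam by (simp add: \<delta>_def)
  with q obtain \<eta> where \<eta>: "plan \<eta>" "cost \<eta> \<le> E + \<delta>" "\<forall>y\<in>S. (\<Sum>x\<in>S. \<eta> x y) = q y"
    by (rule transport_ball_plan)
  have "lam * \<delta> \<le> e"
    using \<open>0 < e\<close> lam by (simp add: \<delta>_def field_simps)
  moreover have "lam * cost \<eta> \<le> lam * (E + \<delta>)"
    using \<eta>(2) lam by (rule mult_left_mono)
  moreover note dual_value_le_plan_payoff[OF \<eta>(1) feasible]
  ultimately show "dual_value lam \<xi> \<le> expected_payoff \<pi> q + e"
    by (simp add: dual_value_def expected_payoff_marginal[OF \<eta>(3)] algebra_simps)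
qed

lemma bdd_below_expected_payoff: "bdd_below (expected_payoff \<pi> ` transport_ball)"
proof -
  have "S \<noteq> {}"
    using \<sigma> by (auto simp: is_mixed_def)
  then have "dual_feasible \<pi> 0 (\<lambda>_. Min (payoff \<pi> ` S))"
    using finite_S by (simp add: dual_feasible_def)
  then show ?thesis
    by (auto intro: bdd_belowI2 dual_value_le_expected_payoff)
qed

lemma dual_value_le_robust_payoff:
  assumes "dual_feasible \<pi> lam \<xi>"
  shows "dual_value lam \<xi> \<le> robust_payoff \<pi>"
  unfolding robust_payoff_def
  using transport_ball_nonempty dual_value_le_expected_payoff[OF _ assms]
  by (auto intro: cInf_greatest)

lemma robust_payoff_le_plan_payoff:
  assumes "plan \<eta>" "cost \<eta> \<le> E"
  shows "robust_payoff \<pi> \<le> (\<Sum>x\<in>S. \<Sum>y\<in>S. \<eta> x y * payoff \<pi> y)"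
proof -
  have "robust_payoff \<pi> \<le> expected_payoff \<pi> (\<lambda>y. \<Sum>x\<in>S. \<eta> x y)"
    unfolding robust_payoff_def
    using plan_marginal_in_transport_ball[OF assms] bdd_below_expected_payoff
    by (auto intro: cInf_lower)
  then show ?thesis
    using expected_payoff_marginal[of \<eta> "\<lambda>y. \<Sum>x\<in>S. \<eta> x y" \<pi>] by simp
qed

lemma robust_payoff_le_scaled_plan:
  assumes nonneg: "\<forall>x\<in>S. \<forall>y\<in>S. 0 \<le> \<eta> x y" and rows: "\<forall>x\<in>S. (\<Sum>y\<in>S. \<eta> x y) = r * \<sigma> x"
    and r: "0 \<le> r" and cost: "cost \<eta> \<le> r * E"
  shows "r * robust_payoff \<pi> \<le> (\<Sum>x\<in>S. \<Sum>y\<in>S. \<eta> x y * payoff \<pi> y)"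
proof (cases "r = 0")
  case True
  then have "\<forall>x\<in>S. \<forall>y\<in>S. \<eta> x y = 0"
    using rows nonneg finite_S by (simp add: sum_nonneg_eq_0_iff)
  then show ?thesis
    using True by simp
next
  case False
  with r have "0 < r" by simp
  have "plan (\<lambda>x y. \<eta> x y / r)"
    using nonneg rows \<open>0 < r\<close> by (simp add: plan_def flip: sum_divide_distrib)
  moreover have "cost (\<lambda>x y. \<eta> x y / r) \<le> E"
    using cost \<open>0 < r\<close>
    by (simp add: cost_def sum_divide_distrib[symmetric] pos_divide_le_eq mult.commute)
  ultimately have "robust_payoff \<pi> \<le> (\<Sum>x\<in>S. \<Sum>y\<in>S. \<eta> x y / r * payoff \<pi> y)"
    by (rule robust_payoff_le_plan_payoff)
  also have "\<dots> = (\<Sum>x\<in>S. \<Sum>y\<in>S. \<eta> x y * payoff \<pi> y) / r"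
    by (simp add: sum_divide_distrib)
  finally show ?thesis
    using \<open>0 < r\<close> by (simp add: pos_le_divide_eq mult.commute)
qed

lemma scaled_dual_value_le_best_response:
  assumes best: "\<forall>\<pi>. is_mixed A \<pi> \<longrightarrow> robust_payoff \<pi> \<le> robust_payoff p"
    and \<pi>: "\<forall>a\<in>A. 0 \<le> \<pi> a" and feasible: "dual_feasible \<pi> lam \<xi>"
  shows "dual_value lam \<xi> \<le> (\<Sum>a\<in>A. \<pi> a) * robust_payoff p"
proof (cases "(\<Sum>a\<in>A. \<pi> a) = 0")
  case True
  then have "payoff \<pi> y = 0" for y
    using \<pi> finite_A by (simp add: payoff_def sum_nonneg_eq_0_iff)
  then have "\<forall>x\<in>S. \<xi> x \<le> 0"
    using feasible c_diag by (force simp: dual_feasible_def)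
  then have "(\<Sum>x\<in>S. \<sigma> x * \<xi> x) \<le> 0"
    using \<sigma> by (auto simp: is_mixed_def intro: sum_nonpos mult_nonneg_nonpos)
  moreover have "0 \<le> lam * E"
    using feasible E_nonneg by (simp add: dual_feasible_def)
  ultimately show ?thesis
    using True by (simp add: dual_value_def)
next
  case False
  define t where "t = (\<Sum>a\<in>A. \<pi> a)"
  have "0 < t"
    using False \<pi> by (simp add: t_def order.not_eq_order_implies_strict sum_nonneg)
  have "is_mixed A (\<lambda>a. \<pi> a / t)"
    using \<pi> \<open>0 < t\<close> by (simp add: is_mixed_def t_def flip: sum_divide_distrib)
  moreover have "dual_feasible (\<lambda>a. \<pi> a / t) (lam / t) (\<lambda>x. \<xi> x / t)"
    using feasible \<open>0 < t\<close>
    by (auto simp: dual_feasible_def payoff_def sum_divide_distrib[symmetric]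
        diff_divide_distrib[symmetric] intro: divide_right_mono)
  ultimately have "dual_value (lam / t) (\<lambda>x. \<xi> x / t) \<le> robust_payoff p"
    using best dual_value_le_robust_payoff order.trans by blast
  moreover have "dual_value (lam / t) (\<lambda>x. \<xi> x / t) = dual_value lam \<xi> / t"
    by (simp add: dual_value_def sum_divide_distrib diff_divide_distrib)
  ultimately show ?thesis
    using \<open>0 < t\<close> by (simp add: t_def divide_le_eq mult.commute)
qed

lemma feasible_dual_or_cheap_scaled_plan:
  "(\<exists>lam \<xi>. dual_feasible \<pi> lam \<xi> \<and> V \<le> dual_value lam \<xi>) \<or>
   (\<exists>r \<eta>. 0 \<le> r \<and> (\<forall>x\<in>S. \<forall>y\<in>S. 0 \<le> \<eta> x y) \<and> (\<forall>x\<in>S. (\<Sum>y\<in>S. \<eta> x y) = r * \<sigma> x)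
      \<and> cost \<eta> \<le> r * E \<and> (\<Sum>x\<in>S. \<Sum>y\<in>S. \<eta> x y * payoff \<pi> y) < r * V)"
proof (cases "\<exists>lam \<xi>. dual_feasible \<pi> lam \<xi> \<and> V \<le> dual_value lam \<xi>")
  case no_dual: False
  \<comment> \<open>unknowns: \<open>None\<close> stands for \<open>lam\<close>, \<open>Some x\<close> for \<open>\<xi> x\<close>;
    constraints: \<open>None\<close> is the bound on the dual value, \<open>Some (x, y)\<close> the feasibility at \<open>(x, y)\<close>\<close>
  define J where "J = insert None (Some ` S)"
  define K where "K = insert None (Some ` (S \<times> S))"
  define a :: "('b \<times> 'b) option \<Rightarrow> 'b option \<Rightarrow> real" where "a k j = (case k of
      None \<Rightarrow> (case j of None \<Rightarrow> E | Some x \<Rightarrow> - \<sigma> x)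
    | Some (x, y) \<Rightarrow> (case j of None \<Rightarrow> - c x y | Some x' \<Rightarrow> of_bool (x' = x)))" for k j
  define \<beta> :: "('b \<times> 'b) option \<Rightarrow> real"
    where "\<beta> k = (case k of None \<Rightarrow> - V | Some (x, y) \<Rightarrow> payoff \<pi> y)" for k
  have sum_J: "(\<Sum>j\<in>J. f j) = f None + (\<Sum>x\<in>S. f (Some x))" for f :: "'b option \<Rightarrow> real"
    using finite_S by (simp add: J_def sum.reindex)
  have sum_K: "(\<Sum>k\<in>K. f k) = f None + (\<Sum>x\<in>S. \<Sum>y\<in>S. f (Some (x, y)))" for f :: "('b \<times> 'b) option \<Rightarrow> real"
    using finite_S by (simp add: K_def sum.reindex sum.cartesian_product)
  have infeasible: "\<nexists>v. (\<forall>j\<in>{None}. 0 \<le> v j) \<and> (\<forall>k\<in>K. (\<Sum>j\<in>J. a k j * v j) \<le> \<beta> k)"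
  proof
    assume "\<exists>v. (\<forall>j\<in>{None}. 0 \<le> v j) \<and> (\<forall>k\<in>K. (\<Sum>j\<in>J. a k j * v j) \<le> \<beta> k)"
    then obtain v where v: "0 \<le> v None" "\<forall>k\<in>K. (\<Sum>j\<in>J. a k j * v j) \<le> \<beta> k" by blast
    have "dual_feasible \<pi> (v None) (\<lambda>x. v (Some x))"
      using v finite_S
      by (auto simp: dual_feasible_def K_def sum_J a_def \<beta>_def of_bool_def if_distrib[of "\<lambda>z. z * _"]
          if_distrib[of "\<lambda>z. _ * z"] mult.commute cong: if_cong)
    moreover have "V \<le> dual_value (v None) (\<lambda>x. v (Some x))"
      using v(2)[rule_format, of None]
      by (simp add: K_def sum_J a_def \<beta>_def dual_value_def sum_negf mult.commute)
    ultimately show False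
      using no_dual by blast
  qed
  have "finite K" "finite J" "{None} \<subseteq> J"
    using finite_S by (simp_all add: K_def J_def)
  from farkas_inequalities[OF this infeasible] obtain w where w: "\<forall>k\<in>K. 0 \<le> w k"
      "\<forall>j\<in>{None}. 0 \<le> (\<Sum>k\<in>K. w k * a k j)" "\<forall>j\<in>J - {None}. (\<Sum>k\<in>K. w k * a k j) = 0"
      "(\<Sum>k\<in>K. w k * \<beta> k) < 0"
    by blast
  define \<eta> where "\<eta> x y = w (Some (x, y))" for x y
  have "(\<Sum>y\<in>S. \<eta> x y) = w None * \<sigma> x" if "x \<in> S" for x
  proof -
    have "(\<Sum>k\<in>K. w k * a k (Some x)) = 0"
      using w(3) that by (simp add: J_def)
    then show ?thesis
      using that finite_S by (simp add: sum_K a_def \<eta>_def flip: sum_distrib_right)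
  qed
  moreover have "cost \<eta> \<le> w None * E"
    using w(2) by (simp add: sum_K a_def \<eta>_def cost_def sum_negf mult.commute)
  moreover have "(\<Sum>x\<in>S. \<Sum>y\<in>S. \<eta> x y * payoff \<pi> y) < w None * V"
    using w(4) by (simp add: sum_K \<beta>_def \<eta>_def)
  moreover have "0 \<le> w None" "\<forall>x\<in>S. \<forall>y\<in>S. 0 \<le> \<eta> x y"
    using w(1) by (auto simp: K_def \<eta>_def)
  ultimately show ?thesis
    by (intro disjI2 exI[of _ "w None"] exI[of _ \<eta>]) simp
qed simp

lemma dual_attained: "\<exists>lam \<xi>. dual_feasible \<pi> lam \<xi> \<and> robust_payoff \<pi> \<le> dual_value lam \<xi>"
  using feasible_dual_or_cheap_scaled_plan[of \<pi> "robust_payoff \<pi>"]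
proof (elim disjE exE conjE)
  fix r \<eta> assume "0 \<le> r" "\<forall>x\<in>S. \<forall>y\<in>S. 0 \<le> \<eta> x y" "\<forall>x\<in>S. (\<Sum>y\<in>S. \<eta> x y) = r * \<sigma> x"
    "cost \<eta> \<le> r * E" "(\<Sum>x\<in>S. \<Sum>y\<in>S. \<eta> x y * payoff \<pi> y) < r * robust_payoff \<pi>"
  with robust_payoff_le_scaled_plan[of \<eta> r \<pi>] show ?thesis
    by simp
qed blast

lemma cheap_plan_or_feasible_dual:
  "(\<exists>\<eta>. plan \<eta> \<and> cost \<eta> \<le> E \<and> (\<forall>a\<in>A. (\<Sum>x\<in>S. \<Sum>y\<in>S. \<eta> x y * u a y) \<le> V)) \<or>
   (\<exists>\<pi> lam \<xi>. (\<forall>a\<in>A. 0 \<le> \<pi> a) \<and> dual_feasible \<pi> lam \<xi> \<and> (\<Sum>a\<in>A. \<pi> a) * V < dual_value lam \<xi>)"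
proof -
  \<comment> \<open>rows: \<open>Inl x\<close> is the marginal at \<open>x\<close>, \<open>Inr None\<close> the budget,
    \<open>Inr (Some a)\<close> the payoff of action \<open>a\<close>\<close>
  define J :: "('b + 'c option) set" where "J = S <+> insert None (Some ` A)"
  define L :: "('b + 'c option) set" where "L = Inr ` insert None (Some ` A)"
  define a :: "'b \<times> 'b \<Rightarrow> 'b + 'c option \<Rightarrow> real" where
    "a z j = (case z of (x, y) \<Rightarrow>
       (case j of Inl x' \<Rightarrow> of_bool (x' = x) | Inr None \<Rightarrow> c x y | Inr (Some b) \<Rightarrow> u b y))" for z j
  define b :: "'b + 'c option \<Rightarrow> real" where
    "b j = (case j of Inl x \<Rightarrow> \<sigma> x | Inr None \<Rightarrow> E | Inr (Some _) \<Rightarrow> V)" for j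
  have sum_J: "(\<Sum>j\<in>J. f j) = (\<Sum>x\<in>S. f (Inl x)) + f (Inr None) + (\<Sum>b\<in>A. f (Inr (Some b)))" for f
    using finite_S finite_A by (simp add: J_def sum.Plus sum.reindex add.assoc)
  have sum_pairs: "(\<Sum>z\<in>S \<times> S. f z) = (\<Sum>x\<in>S. \<Sum>y\<in>S. f (x, y))" for f :: "'b \<times> 'b \<Rightarrow> real"
    by (simp add: sum.cartesian_product)
  have "finite (S \<times> S)" "finite J" "L \<subseteq> J"
    using finite_S finite_A by (auto simp: J_def L_def)
  from farkas_cone_inequalities[OF this, where a = a and b = b] show ?thesis
  proof (elim disjE exE conjE)
    fix \<mu> assume \<mu>: "\<forall>z\<in>S \<times> S. 0 \<le> \<mu> z" "\<forall>j\<in>L. (\<Sum>z\<in>S \<times> S. \<mu> z * a z j) \<le> b j"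
      "\<forall>j\<in>J - L. (\<Sum>z\<in>S \<times> S. \<mu> z * a z j) = b j"
    define \<eta> where "\<eta> x y = \<mu> (x, y)" for x y
    have "(\<Sum>y\<in>S. \<eta> x y) = \<sigma> x" if "x \<in> S" for x
      using \<mu>(3)[rule_format, of "Inl x"] that finite_S
      by (simp add: J_def L_def sum_pairs a_def b_def \<eta>_def InlI image_iff flip: sum_distrib_right)
    then have "plan \<eta>"
      using \<mu>(1) by (simp add: plan_def \<eta>_def)
    moreover have "cost \<eta> \<le> E"
      using \<mu>(2)[rule_format, of "Inr None"] by (simp add: L_def sum_pairs a_def b_def cost_def \<eta>_def)
    moreover have "(\<Sum>x\<in>S. \<Sum>y\<in>S. \<eta> x y * u b y) \<le> V" if "b \<in> A" for b
      using \<mu>(2)[rule_format, of "Inr (Some b)"] that by (simp add: L_def sum_pairs a_def b_def \<eta>_def)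
    ultimately show ?thesis by blast
  next
    fix w assume w: "\<forall>j\<in>L. 0 \<le> w j" "\<forall>z\<in>S \<times> S. 0 \<le> (\<Sum>j\<in>J. w j * a z j)"
      "(\<Sum>j\<in>J. w j * b j) < 0"
    define \<pi> where "\<pi> b = w (Inr (Some b))" for b
    define lam where "lam = w (Inr None)"
    define \<xi> where "\<xi> x = - w (Inl x)" for x
    have "dual_feasible \<pi> lam \<xi>"
      unfolding dual_feasible_def
    proof (intro conjI ballI)
      show "0 \<le> lam"
        using w(1) by (simp add: L_def lam_def)
      fix x y assume "x \<in> S" "y \<in> S"
      then have "0 \<le> (\<Sum>j\<in>J. w j * a (x, y) j)"
        using w(2) by blast
      also have "\<dots> = - \<xi> x + lam * c x y + payoff \<pi> y"
        using \<open>x \<in> S\<close> finite_S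
        by (simp add: sum_J a_def \<pi>_def lam_def \<xi>_def payoff_def mult.commute of_bool_def
            if_distrib[of "\<lambda>z. _ * z"] cong: if_cong)
      finally show "\<xi> x - lam * c x y \<le> payoff \<pi> y"
        by simp
    qed
    moreover have "\<forall>b\<in>A. 0 \<le> \<pi> b"
      using w(1) by (simp add: L_def \<pi>_def)
    moreover have "(\<Sum>j\<in>J. w j * b j) = (\<Sum>b\<in>A. \<pi> b) * V - dual_value lam \<xi>"
      by (simp add: sum_J b_def \<pi>_def lam_def \<xi>_def dual_value_def sum_distrib_left sum_negf
          mult.commute)
    ultimately show ?thesis
      using w(3) by force
  qed
qed

lemma minimax_plan:
  assumes best: "\<forall>\<pi>. is_mixed A \<pi> \<longrightarrow> robust_payoff \<pi> \<le> robust_payoff p"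
  shows "\<exists>\<eta>. plan \<eta> \<and> cost \<eta> \<le> E \<and> (\<forall>a\<in>A. (\<Sum>x\<in>S. \<Sum>y\<in>S. \<eta> x y * u a y) \<le> robust_payoff p)"
  using cheap_plan_or_feasible_dual[of "robust_payoff p"]
proof (elim disjE exE conjE)
  fix \<pi> lam \<xi> assume "\<forall>a\<in>A. 0 \<le> \<pi> a" "dual_feasible \<pi> lam \<xi>"
    "(\<Sum>a\<in>A. \<pi> a) * robust_payoff p < dual_value lam \<xi>"
  with scaled_dual_value_le_best_response[OF best] show ?thesis
    by fastforce
qed blast

lemma plan_payoff_of_action_slacks:
  assumes "\<forall>a\<in>A. \<omega> a + \<kappa> + (\<Sum>x\<in>S. \<Sum>y\<in>S. \<eta> x y * u a y) = 0" "(\<Sum>a\<in>A. \<pi> a) = 1"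
  shows "(\<Sum>x\<in>S. \<Sum>y\<in>S. \<eta> x y * payoff \<pi> y) = - (\<Sum>a\<in>A. \<pi> a * \<omega> a) - \<kappa>"
proof -
  have "(\<Sum>x\<in>S. \<Sum>y\<in>S. \<eta> x y * payoff \<pi> y) = (\<Sum>a\<in>A. \<pi> a * (- \<omega> a - \<kappa>))"
    unfolding plan_payoff_by_action using assms(1) by (intro sum.cong) (auto simp: eq_neg_iff_add_eq_0)
  also have "\<dots> = - (\<Sum>a\<in>A. \<pi> a * \<omega> a) - \<kappa> * (\<Sum>a\<in>A. \<pi> a)"
    by (simp add: algebra_simps sum_subtractf sum_distrib_left sum_negf)
  finally show ?thesis
    using assms(2) by simp
qed

lemma duality_gap:
  assumes payoff_slack: "\<forall>a\<in>A. \<omega> a + \<kappa> + (\<Sum>x\<in>S. \<Sum>y\<in>S. \<eta> x y * u a y) = 0"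
    and budget: "- E + \<tau> + (\<Sum>x\<in>S. \<Sum>y\<in>S. \<eta> x y * c x y) = 0"
    and marginal: "\<forall>x\<in>S. \<sigma> x - (\<Sum>y\<in>S. \<eta> x y) = 0"
    and p: "(\<Sum>a\<in>A. p a) = 1"
  shows "(\<Sum>x\<in>S. \<Sum>y\<in>S. \<eta> x y * (- \<xi> x + payoff p y + lam * c x y)) + \<tau> * lam
           + (\<Sum>a\<in>A. \<omega> a * p a) = - dual_value lam \<xi> - \<kappa>"
proof -
  have "(\<Sum>y\<in>S. \<eta> x y * (- \<xi> x + payoff p y + lam * c x y))
      = - (\<xi> x * (\<Sum>y\<in>S. \<eta> x y)) + (\<Sum>y\<in>S. \<eta> x y * payoff p y) + lam * (\<Sum>y\<in>S. \<eta> x y * c x y)"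
    for x
    by (simp add: distrib_left right_diff_distrib sum.distrib sum_subtractf sum_distrib_left mult_ac)
  then have "(\<Sum>x\<in>S. \<Sum>y\<in>S. \<eta> x y * (- \<xi> x + payoff p y + lam * c x y))
      = - (\<Sum>x\<in>S. \<xi> x * (\<Sum>y\<in>S. \<eta> x y)) + (\<Sum>x\<in>S. \<Sum>y\<in>S. \<eta> x y * payoff p y)
        + lam * (\<Sum>x\<in>S. \<Sum>y\<in>S. \<eta> x y * c x y)"
    by (simp add: sum.distrib sum_subtractf sum_distrib_left)
  also have "(\<Sum>x\<in>S. \<xi> x * (\<Sum>y\<in>S. \<eta> x y)) = (\<Sum>x\<in>S. \<sigma> x * \<xi> x)"
    using marginal by (intro sum.cong) auto
  also have "(\<Sum>x\<in>S. \<Sum>y\<in>S. \<eta> x y * payoff p y) = - (\<Sum>a\<in>A. p a * \<omega> a) - \<kappa>"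
    by (rule plan_payoff_of_action_slacks[OF payoff_slack p])
  also have "(\<Sum>x\<in>S. \<Sum>y\<in>S. \<eta> x y * c x y) = E - \<tau>"
    using budget by simp
  finally show ?thesis
    by (simp add: dual_value_def algebra_simps)
qed

lemma robust_kkt_if_no_gap:
  assumes p: "is_mixed A p"
    and \<eta>: "\<forall>x\<in>S. \<forall>y\<in>S. 0 \<le> \<eta> x y" and \<tau>: "0 \<le> \<tau>" and \<omega>: "\<forall>a\<in>A. 0 \<le> \<omega> a"
    and payoff_slack: "\<forall>a\<in>A. \<omega> a + \<kappa> + (\<Sum>x\<in>S. \<Sum>y\<in>S. \<eta> x y * u a y) = 0"
    and budget: "- E + \<tau> + (\<Sum>x\<in>S. \<Sum>y\<in>S. \<eta> x y * c x y) = 0"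
    and marginal: "\<forall>x\<in>S. \<sigma> x - (\<Sum>y\<in>S. \<eta> x y) = 0"
    and dual: "dual_feasible p lam \<xi>" and no_gap: "- \<kappa> \<le> dual_value lam \<xi>"
  shows "robust_kkt S A \<sigma> c E u p"
proof -
  define G where "G x y = - \<xi> x + payoff p y + lam * c x y" for x y
  have lam: "0 \<le> lam"
    using dual by (simp add: dual_feasible_def)
  have G: "\<forall>x\<in>S. \<forall>y\<in>S. 0 \<le> G x y"
  proof (intro ballI)
    fix x y assume "x \<in> S" "y \<in> S"
    with dual have "\<xi> x - lam * c x y \<le> payoff p y"
      by (simp add: dual_feasible_def)
    then show "0 \<le> G x y"
      by (simp add: G_def)
  qed
  have p_nonneg: "\<forall>a\<in>A. 0 \<le> p a" and p_sum: "(\<Sum>a\<in>A. p a) = 1"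
    using p by (auto simp: is_mixed_def)
  have "0 \<le> (\<Sum>x\<in>S. \<Sum>y\<in>S. \<eta> x y * G x y)" "0 \<le> \<tau> * lam" "0 \<le> (\<Sum>a\<in>A. \<omega> a * p a)"
    using \<eta> G \<tau> lam \<omega> p_nonneg by (auto intro!: sum_nonneg)
  moreover have "(\<Sum>x\<in>S. \<Sum>y\<in>S. \<eta> x y * G x y) + \<tau> * lam + (\<Sum>a\<in>A. \<omega> a * p a) \<le> 0"
    using duality_gap[OF payoff_slack budget marginal p_sum, of \<xi> lam] no_gap by (simp add: G_def)
  ultimately have "(\<Sum>x\<in>S. \<Sum>y\<in>S. \<eta> x y * G x y) = 0" "\<tau> * lam = 0" "(\<Sum>a\<in>A. \<omega> a * p a) = 0"
    by linarith+
  moreover from this have "\<forall>x\<in>S. \<forall>y\<in>S. \<eta> x y * G x y = 0" "\<forall>a\<in>A. \<omega> a * p a = 0"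
    using finite_S finite_A \<eta> G \<omega> p_nonneg by (simp_all add: sum_nonneg_eq_0_iff sum_nonneg)
  ultimately show ?thesis
    unfolding robust_kkt_def perp_def
    using payoff_slack budget marginal \<eta> G \<tau> lam \<omega> p_nonneg
    by (intro exI[of _ lam] exI[of _ \<xi>] exI[of _ \<tau>] exI[of _ \<omega>] exI[of _ \<kappa>] exI[of _ \<eta>])
      (simp add: G_def payoff_def)
qed

lemma kkt_if_best_response:
  assumes p: "is_mixed A p" and best: "\<forall>\<pi>. is_mixed A \<pi> \<longrightarrow> robust_payoff \<pi> \<le> robust_payoff p"
  shows "robust_kkt S A \<sigma> c E u p"
proof -
  obtain lam \<xi> where "dual_feasible p lam \<xi>" "robust_payoff p \<le> dual_value lam \<xi>"
    using dual_attained by blast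
  moreover obtain \<eta> where "plan \<eta>" "cost \<eta> \<le> E"
      "\<forall>a\<in>A. (\<Sum>x\<in>S. \<Sum>y\<in>S. \<eta> x y * u a y) \<le> robust_payoff p"
    using minimax_plan[OF best] by blast
  ultimately show ?thesis
    using p by (intro robust_kkt_if_no_gap[where \<eta> = \<eta> and \<tau> = "E - cost \<eta>" and \<kappa> = "- robust_payoff p"
          and \<omega> = "\<lambda>a. robust_payoff p - (\<Sum>x\<in>S. \<Sum>y\<in>S. \<eta> x y * u a y)"])
      (auto simp: plan_def cost_def)
qed

lemma complementary_dual_solution:
  assumes p_sum: "(\<Sum>a\<in>A. p a) = 1"
    and payoff_slack: "\<forall>a\<in>A. \<omega> a + \<kappa> + (\<Sum>x\<in>S. \<Sum>y\<in>S. \<eta> x y * u a y) = 0"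
    and budget: "- E + \<tau> + (\<Sum>x\<in>S. \<Sum>y\<in>S. \<eta> x y * c x y) = 0"
    and marginal: "\<forall>x\<in>S. \<sigma> x - (\<Sum>y\<in>S. \<eta> x y) = 0"
    and \<tau>: "perp \<tau> lam" and \<omega>: "\<forall>a\<in>A. perp (\<omega> a) (p a)"
    and \<eta>: "\<forall>x\<in>S. \<forall>y\<in>S. perp (\<eta> x y) (- \<xi> x + (\<Sum>a\<in>A. u a y * p a) + lam * c x y)"
  shows "dual_feasible p lam \<xi>" "dual_value lam \<xi> = - \<kappa>"
proof -
  show "dual_feasible p lam \<xi>"
    unfolding dual_feasible_def payoff_def
  proof (intro conjI ballI)
    show "0 \<le> lam"
      using \<tau> by (simp add: perp_def)
    fix x y assume "x \<in> S" "y \<in> S"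
    with \<eta> have "0 \<le> - \<xi> x + (\<Sum>a\<in>A. u a y * p a) + lam * c x y"
      by (simp add: perp_def)
    then show "\<xi> x - lam * c x y \<le> (\<Sum>a\<in>A. u a y * p a)"
      by simp
  qed
  have "(\<Sum>x\<in>S. \<Sum>y\<in>S. \<eta> x y * (- \<xi> x + payoff p y + lam * c x y)) = 0"
    using \<eta> by (intro sum.neutral ballI) (simp add: perp_def payoff_def)
  moreover have "\<tau> * lam = 0"
    using \<tau> by (simp add: perp_def)
  moreover have "(\<Sum>a\<in>A. \<omega> a * p a) = 0"
    using \<omega> by (intro sum.neutral ballI) (simp add: perp_def)
  ultimately show "dual_value lam \<xi> = - \<kappa>"
    using duality_gap[OF payoff_slack budget marginal p_sum, of \<xi> lam] by linarith
qed

lemma best_response_if_kkt: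
  assumes p: "is_mixed A p" and kkt: "robust_kkt S A \<sigma> c E u p"
  shows "\<forall>\<pi>. is_mixed A \<pi> \<longrightarrow> robust_payoff \<pi> \<le> robust_payoff p"
proof (intro allI impI)
  fix \<pi> assume \<pi>: "is_mixed A \<pi>"
  obtain lam \<xi> \<tau> \<omega> \<kappa> \<eta> where
    payoff_slack: "\<forall>a\<in>A. \<omega> a + \<kappa> + (\<Sum>x\<in>S. \<Sum>y\<in>S. \<eta> x y * u a y) = 0"
    and budget: "- E + \<tau> + (\<Sum>x\<in>S. \<Sum>y\<in>S. \<eta> x y * c x y) = 0"
    and marginal: "\<forall>x\<in>S. \<sigma> x - (\<Sum>y\<in>S. \<eta> x y) = 0"
    and \<tau>: "perp \<tau> lam" and \<omega>: "\<forall>a\<in>A. perp (\<omega> a) (p a)"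
    and \<eta>: "\<forall>x\<in>S. \<forall>y\<in>S. perp (\<eta> x y) (- \<xi> x + (\<Sum>a\<in>A. u a y * p a) + lam * c x y)"
    using kkt unfolding robust_kkt_def by blast
  have p_sum: "(\<Sum>a\<in>A. p a) = 1" and \<pi>_nonneg: "\<forall>a\<in>A. 0 \<le> \<pi> a" and \<pi>_sum: "(\<Sum>a\<in>A. \<pi> a) = 1"
    using p \<pi> by (auto simp: is_mixed_def)
  note dual = complementary_dual_solution[OF p_sum payoff_slack budget marginal \<tau> \<omega> \<eta>]
  have "plan \<eta>" "cost \<eta> \<le> E"
    using \<eta> marginal budget \<tau> by (auto simp: plan_def cost_def perp_def)
  then have "robust_payoff \<pi> \<le> (\<Sum>x\<in>S. \<Sum>y\<in>S. \<eta> x y * payoff \<pi> y)"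
    by (rule robust_payoff_le_plan_payoff)
  also have "\<dots> = - (\<Sum>a\<in>A. \<pi> a * \<omega> a) - \<kappa>"
    by (rule plan_payoff_of_action_slacks[OF payoff_slack \<pi>_sum])
  also have "\<dots> \<le> - \<kappa>"
    using \<pi>_nonneg \<omega> by (simp add: perp_def sum_nonneg)
  also have "\<dots> \<le> robust_payoff p"
    using dual_value_le_robust_payoff[OF dual(1)] dual(2) by simp
  finally show "robust_payoff \<pi> \<le> robust_payoff p" .
qed

theorem best_response_iff_kkt:
  assumes "is_mixed A p"
  shows "(\<forall>\<pi>. is_mixed A \<pi> \<longrightarrow> robust_payoff \<pi> \<le> robust_payoff p) \<longleftrightarrow> robust_kkt S A \<sigma> c E u p"
  using kkt_if_best_response best_response_if_kkt assms by blast

end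

section \<open>Strategically robust equilibria\<close>

lemma is_mixed_sigma_opp:
  assumes fin: "\<forall>j<N. finite (A j)" and mixed: "\<forall>j<N. is_mixed (A j) (p j)"
  shows "is_mixed (opp_profiles N A i) (sigma_opp N i p)"
proof -
  have "(\<Sum>b\<in>opp_profiles N A i. sigma_opp N i p b) = (\<Prod>j\<in>{..<N} - {i}. \<Sum>a\<in>A j. p j a)"
    unfolding opp_profiles_def sigma_opp_def using fin by (intro prod_sum_PiE[symmetric]) auto
  also have "\<dots> = 1"
    using mixed by (intro prod.neutral) (auto simp: is_mixed_def)
  finally show ?thesis
    using mixed
    by (auto simp: is_mixed_def sigma_opp_def opp_profiles_def PiE_def Pi_def intro!: prod_nonneg)
qed

lemma robust_best_response_iff_kkt:
  assumes fin: "\<forall>j<N. finite (A j)" and mixed: "\<forall>j<N. is_mixed (A j) (p j)" and i: "i < N"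
    and eps: "0 \<le> eps" and s: "1 \<le> s" and metric: "metric_on (opp_profiles N A i) (d i)"
  shows "(\<forall>\<pi>. is_mixed (A i) \<pi> \<longrightarrow>
             robust_value N A u d s eps i p \<pi> \<le> robust_value N A u d s eps i p (p i))
    \<longleftrightarrow> robust_kkt (opp_profiles N A i) (A i) (sigma_opp N i p) (\<lambda>b b'. d i b b' powr s)
          (eps powr s) (\<lambda>a b. u i (b(i := a))) (p i)"
proof -
  have \<sigma>: "is_mixed (opp_profiles N A i) (sigma_opp N i p)"
    using fin mixed by (rule is_mixed_sigma_opp)
  have d: "\<forall>x\<in>opp_profiles N A i. \<forall>y\<in>opp_profiles N A i. 0 \<le> d i x y"
    using metric by (simp add: metric_on_def)
  have s_pos: "0 < s"
    using s by simp
  interpret robust_player "opp_profiles N A i" "A i" "sigma_opp N i p" "\<lambda>b b'. d i b b' powr s"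
    "eps powr s" "\<lambda>a b. u i (b(i := a))"
    using fin i \<sigma> metric s
    by unfold_locales (auto simp: opp_profiles_def metric_on_def intro!: finite_PiE)
  have ball: "q \<in> ambiguity_set N A d s eps i p \<longleftrightarrow> q \<in> transport_ball" for q
  proof
    assume "q \<in> ambiguity_set N A d s eps i p"
    then have "is_mixed (opp_profiles N A i) q"
      and "wasserstein (opp_profiles N A i) (d i) s (sigma_opp N i p) q \<le> eps"
      by (simp_all add: ambiguity_set_def)
    then show "q \<in> transport_ball"
      using wasserstein_le_iff[OF \<sigma> _ d s_pos eps] by (simp add: transport_ball_def)
  next
    assume q: "q \<in> transport_ball"
    then obtain g where "g \<in> couplings (opp_profiles N A i) (sigma_opp N i p) q"
      unfolding transport_ball_def using zero_less_one by blast
    then have "is_mixed (opp_profiles N A i) q"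
      using \<sigma> by (rule is_mixed_coupling_marginal)
    with q show "q \<in> ambiguity_set N A d s eps i p"
      using wasserstein_le_iff[OF \<sigma> _ d s_pos eps] by (simp add: ambiguity_set_def transport_ball_def)
  qed
  then have "ambiguity_set N A d s eps i p = transport_ball"
    by blast
  then have "robust_value N A u d s eps i p = robust_payoff"
    by (simp add: fun_eq_iff robust_value_def robust_payoff_def U_def expected_payoff_def)
  then show ?thesis
    using best_response_iff_kkt mixed i by simp
qed

theorem proposition2:
  fixes N :: nat and A :: "nat \<Rightarrow> 'a set"
    and u :: "nat \<Rightarrow> (nat \<Rightarrow> 'a) \<Rightarrow> real"
    and d :: "nat \<Rightarrow> (nat \<Rightarrow> 'a) \<Rightarrow> (nat \<Rightarrow> 'a) \<Rightarrow> real"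
    and eps s :: real and p :: "nat \<Rightarrow> 'a \<Rightarrow> real"
  assumes fin: "\<forall>i<N. finite (A i) \<and> A i \<noteq> {}"
    and eps: "eps \<ge> 0" and s: "s \<ge> 1"
    and metric: "\<forall>i<N. metric_on (opp_profiles N A i) (d i)"
    and mixed: "\<forall>i<N. is_mixed (A i) (p i)"
  shows "strategically_robust_eq N A u d s eps p \<longleftrightarrow>
    (\<forall>i<N. \<exists>(lam::real) (xi::(nat \<Rightarrow> 'a) \<Rightarrow> real) (tau::real) (om::'a \<Rightarrow> real) (ka::real)
              (eta::(nat \<Rightarrow> 'a) \<Rightarrow> (nat \<Rightarrow> 'a) \<Rightarrow> real).
       (\<forall>a\<in>A i. om a + ka + (\<Sum>b\<in>opp_profiles N A i. \<Sum>b'\<in>opp_profiles N A i.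
                                  eta b b' * u i (b'(i := a))) = 0) \<and>
       - (eps powr s) + tau + (\<Sum>b\<in>opp_profiles N A i. \<Sum>b'\<in>opp_profiles N A i.
                                  eta b b' * d i b b' powr s) = 0 \<and>
       (\<forall>b\<in>opp_profiles N A i. (\<Prod>j\<in>{..<N} - {i}. p j (b j))
                                   - (\<Sum>b'\<in>opp_profiles N A i. eta b b') = 0) \<and>
       perp tau lam \<and>
       (\<forall>a\<in>A i. perp (om a) (p i a)) \<and>
       (\<forall>b\<in>opp_profiles N A i. \<forall>b'\<in>opp_profiles N A i.
          perp (eta b b') (- xi b + (\<Sum>a\<in>A i. u i (b'(i := a)) * p i a) + lam * d i b b' powr s)))"
proof -
  have finite_A: "\<forall>i<N. finite (A i)"
    using fin by blast
  have "strategically_robust_eq N A u d s eps p \<longleftrightarrow>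
      (\<forall>i<N. \<forall>\<pi>. is_mixed (A i) \<pi> \<longrightarrow>
        robust_value N A u d s eps i p \<pi> \<le> robust_value N A u d s eps i p (p i))"
    using mixed by (auto simp: strategically_robust_eq_def)
  also have "\<dots> \<longleftrightarrow> (\<forall>i<N. robust_kkt (opp_profiles N A i) (A i) (sigma_opp N i p)
      (\<lambda>b b'. d i b b' powr s) (eps powr s) (\<lambda>a b. u i (b(i := a))) (p i))"
    using robust_best_response_iff_kkt[OF finite_A mixed _ eps s] metric by simp
  finally show ?thesis
    unfolding robust_kkt_def sigma_opp_def .
qed

end
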